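(* Let $\kappa>0$, $m>0$, and let $L_{\kappa,m}$ be as in the context. Suppose $\delta\in(0,1)$ and $0<\rho_1<\rho_2<\min\{R_\kappa,m\delta\}$. Then with $\beta=\sqrt{1-\delta^2}$, \[\frac{L_{\kappa,m}(\rho_2)}{L_{\kappa,m}(\rho_1)}\ge\frac12\left[\left(\frac{\rho_2}{\rho_1}\right)^{\beta m}-\left(\frac{\rho_2}{\rho_1}\right)^{-\beta m}\right].\]
   Context: For $\kappa>0$: $\sin_\kappa(\rho)=\sin(\sqrt{\kappa}\rho)/\sqrt{\kappa}$, $\cos_\kappa=(\sin_\kappa)'$, $R_\kappa=\pi/(2\sqrt{\kappa})$. $L_{\kappa,m}$ is a solution of \[\sin_\kappa^2(\rho)L''(\rho)+\sin_\kappa(\rho)\cos_\kappa(\rho)L'(\rho)+(\sin_\kappa^2(\rho)-m^2)L(\rho)=0\] that is well defined (regular) at $\rho=0$ and positive on some interval $(0,\varepsilon)$. *)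

theory Defs
  imports "HOL-Analysis.Analysis"
begin

definition sin_k :: "real \<Rightarrow> real \<Rightarrow> real" where
  "sin_k \<kappa> \<rho> = sin (sqrt \<kappa> * \<rho>) / sqrt \<kappa>"

definition cos_k :: "real \<Rightarrow> real \<Rightarrow> real" where
  "cos_k \<kappa> \<rho> = cos (sqrt \<kappa> * \<rho>)"

definition R_k :: "real \<Rightarrow> real" where
  "R_k \<kappa> = pi / (2 * sqrt \<kappa>)"

definition is_L :: "real \<Rightarrow> real \<Rightarrow> (real \<Rightarrow> real) \<Rightarrow> bool" where
  "is_L \<kappa> m L \<longleftrightarrow>
     (\<exists>L' L''. \<forall>\<rho>\<in>{0<..<R_k \<kappa>}.
        (L has_real_derivative L' \<rho>) (at \<rho>) \<and>
        (L' has_real_derivative L'' \<rho>) (at \<rho>) \<and>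
        (sin_k \<kappa> \<rho>)^2 * L'' \<rho> + sin_k \<kappa> \<rho> * cos_k \<kappa> \<rho> * L' \<rho>
          + ((sin_k \<kappa> \<rho>)^2 - m^2) * L \<rho> = 0)
   \<and> (\<exists>c. (L \<longlongrightarrow> c) (at_right 0))
   \<and> (\<exists>\<epsilon>>0. \<forall>\<rho>\<in>{0<..<\<epsilon>}. L \<rho> > 0)"

end

theory Submission
  imports Defs
begin

text \<open>In the conformal coordinate t = ln tan (sqrt \<kappa> \<rho> / 2), for which dt = d\<rho> / sin_k \<rho>, the
  equation reads L_tt = (m^2 - sin_k^2) L, and the flux L_t = sin_k L' increases wherever L > 0 and
  sin_k < m. Regularity at 0 forces the flux to be positive near 0, since a negative flux would make
  L grow like -ln \<rho>; hence L and its flux stay positive for \<rho> < min R_\<kappa> m.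
  For \<rho> < m \<delta> we have sin_k^2 \<le> \<rho>^2 \<le> m^2 - a^2 with a = \<beta> m, so the Wronskian of L and
  cosh (a (t - t \<rho>1)) is nondecreasing, which gives L \<rho>2 \<ge> L \<rho>1 cosh (a (t \<rho>2 - t \<rho>1)).
  Finally t \<rho>2 - t \<rho>1 \<ge> ln (\<rho>2 / \<rho>1) because sin_k \<rho> \<le> \<rho>, and the right-hand side of the
  theorem is sinh (a ln (\<rho>2 / \<rho>1)) \<le> cosh (a ln (\<rho>2 / \<rho>1)).\<close>

lemma has_real_derivative_nonneg_imp_le:
  fixes f f' :: "real \<Rightarrow> real"
  assumes "a \<le> b"
    and "\<And>x. a \<le> x \<Longrightarrow> x \<le> b \<Longrightarrow> (f has_real_derivative f' x) (at x)"
    and "\<And>x. a < x \<Longrightarrow> x < b \<Longrightarrow> 0 \<le> f' x"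
  shows "f a \<le> f b"
proof (rule DERIV_nonneg_imp_increasing_open[OF \<open>a \<le> b\<close>])
  show "continuous_on {a..b} f"
    using assms(2) by (blast intro: DERIV_atLeastAtMost_imp_continuous_on)
qed (meson assms less_imp_le)

lemma has_real_derivative_pos_imp_less:
  fixes f f' :: "real \<Rightarrow> real"
  assumes "a < b"
    and "\<And>x. a \<le> x \<Longrightarrow> x \<le> b \<Longrightarrow> (f has_real_derivative f' x) (at x)"
    and "\<And>x. a < x \<Longrightarrow> x < b \<Longrightarrow> 0 < f' x"
  shows "f a < f b"
proof (rule DERIV_pos_imp_increasing_open[OF \<open>a < b\<close>])
  show "continuous_on {a..b} f"
    using assms(2) by (blast intro: DERIV_atLeastAtMost_imp_continuous_on)
qed (meson assms less_imp_le)

lemma less_R_k_iff: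
  assumes "0 < \<kappa>"
  shows "\<rho> < R_k \<kappa> \<longleftrightarrow> sqrt \<kappa> * \<rho> < pi / 2"
  using assms unfolding R_k_def by (simp add: field_simps)

lemma sin_k_pos:
  assumes "0 < \<kappa>" "0 < \<rho>" "\<rho> < R_k \<kappa>"
  shows "0 < sin_k \<kappa> \<rho>"
proof -
  have "0 < sqrt \<kappa> * \<rho>" "sqrt \<kappa> * \<rho> < pi / 2"
    using assms less_R_k_iff by simp_all
  then have "0 < sin (sqrt \<kappa> * \<rho>)"
    by (intro sin_gt_zero) auto
  then show ?thesis
    using assms unfolding sin_k_def by simp
qed

lemma sin_k_le:
  assumes "0 < \<kappa>" "0 \<le> \<rho>"
  shows "sin_k \<kappa> \<rho> \<le> \<rho>"
  using sin_x_le_x[of "sqrt \<kappa> * \<rho>"] assms unfolding sin_k_def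
  by (simp add: divide_le_eq mult.commute)

lemma has_real_derivative_sin_k:
  assumes "0 < \<kappa>"
  shows "(sin_k \<kappa> has_real_derivative cos_k \<kappa> \<rho>) (at \<rho>)"
  unfolding sin_k_def[abs_def] cos_k_def using assms
  by (auto intro!: derivative_eq_intros simp: mult.assoc)

definition conformal_coord :: "real \<Rightarrow> real \<Rightarrow> real" where
  "conformal_coord \<kappa> \<rho> = ln (tan (sqrt \<kappa> * \<rho> / 2))"

lemma has_real_derivative_conformal_coord:
  assumes "0 < \<kappa>" "0 < \<rho>" "\<rho> < R_k \<kappa>"
  shows "(conformal_coord \<kappa> has_real_derivative 1 / sin_k \<kappa> \<rho>) (at \<rho>)"
proof -
  define y where "y = sqrt \<kappa> * \<rho> / 2"
  have "0 < sqrt \<kappa> * \<rho>" "sqrt \<kappa> * \<rho> < pi / 2"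
    using assms less_R_k_iff by simp_all
  then have "0 < y" "y < pi / 2"
    unfolding y_def by linarith+
  then have cos_y: "0 < cos y" and sin_y: "0 < sin y"
    by (auto intro: cos_gt_zero sin_gt_zero)
  have "((\<lambda>r. sqrt \<kappa> * r / 2) has_real_derivative sqrt \<kappa> / 2) (at \<rho>)"
    by (auto intro!: derivative_eq_intros)
  from DERIV_chain2[OF DERIV_tan this] have
    "((\<lambda>r. tan (sqrt \<kappa> * r / 2)) has_real_derivative inverse ((cos y)\<^sup>2) * (sqrt \<kappa> / 2)) (at \<rho>)"
    using cos_y unfolding y_def by simp
  from DERIV_chain2[OF DERIV_ln_divide this] have
    "(conformal_coord \<kappa> has_real_derivative sqrt \<kappa> / (2 * sin y * cos y)) (at \<rho>)"
    using cos_y sin_y unfolding conformal_coord_def[abs_def] y_def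
    by (simp add: tan_def field_simps power2_eq_square)
  moreover have "sin_k \<kappa> \<rho> = 2 * sin y * cos y / sqrt \<kappa>"
    unfolding sin_k_def y_def by (simp flip: sin_double)
  ultimately show ?thesis
    by simp
qed

lemma ln_ratio_le_conformal_coord_diff:
  assumes "0 < \<kappa>" "0 < \<rho>1" "\<rho>1 \<le> \<rho>2" "\<rho>2 < R_k \<kappa>"
  shows "ln (\<rho>2 / \<rho>1) \<le> conformal_coord \<kappa> \<rho>2 - conformal_coord \<kappa> \<rho>1"
proof -
  have "conformal_coord \<kappa> \<rho>1 - ln \<rho>1 \<le> conformal_coord \<kappa> \<rho>2 - ln \<rho>2"
  proof (rule has_real_derivative_nonneg_imp_le[OF \<open>\<rho>1 \<le> \<rho>2\<close>])
    fix x assume "\<rho>1 \<le> x" "x \<le> \<rho>2"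
    then show "((\<lambda>r. conformal_coord \<kappa> r - ln r) has_real_derivative 1 / sin_k \<kappa> x - 1 / x) (at x)"
      using assms by (intro DERIV_diff has_real_derivative_conformal_coord DERIV_ln_divide) auto
  next
    fix x assume "\<rho>1 < x" "x < \<rho>2"
    then show "0 \<le> 1 / sin_k \<kappa> x - 1 / x"
      using assms sin_k_pos[of \<kappa> x] sin_k_le[of \<kappa> x] by (simp add: frac_le)
  qed
  then show ?thesis
    using assms by (simp add: ln_div)
qed

lemma deriv_le_neg_inverse_imp_filterlim_at_top:
  fixes L L' :: "real \<Rightarrow> real"
  assumes "0 < k" "0 < z"
    and deriv: "\<And>y. 0 < y \<Longrightarrow> y \<le> z \<Longrightarrow> (L has_real_derivative L' y) (at y)"
    and deriv_le: "\<And>y. 0 < y \<Longrightarrow> y \<le> z \<Longrightarrow> L' y \<le> - k / y"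
  shows "filterlim L at_top (at_right 0)"
proof -
  have lower: "L z + k * (ln z - ln x) \<le> L x" if "0 < x" "x \<le> z" for x
  proof -
    have "- (L x + k * ln x) \<le> - (L z + k * ln z)"
    proof (rule has_real_derivative_nonneg_imp_le[where f = "\<lambda>r. - (L r + k * ln r)"])
      fix y assume "x \<le> y" "y \<le> z"
      then show "((\<lambda>r. - (L r + k * ln r)) has_real_derivative - (L' y + k * (1 / y))) (at y)"
        using that by (intro DERIV_minus DERIV_add DERIV_cmult deriv DERIV_ln_divide) auto
    next
      fix y assume "x < y" "y < z"
      then show "0 \<le> - (L' y + k * (1 / y))"
        using that deriv_le[of y] by simp
    qed (use that in auto)
    then show ?thesis
      by (simp add: algebra_simps)
  qed
  have "filterlim (\<lambda>x. - ln x) at_top (at_right (0::real))"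
    using ln_at_0 by (simp add: filterlim_uminus_at_bot)
  then have "filterlim (\<lambda>x. (L z + k * ln z) + k * - ln x) at_top (at_right 0)"
    by (intro filterlim_tendsto_add_at_top[OF tendsto_const]
        filterlim_tendsto_pos_mult_at_top[OF tendsto_const \<open>0 < k\<close>])
  then have "filterlim (\<lambda>x. L z + k * (ln z - ln x)) at_top (at_right 0)"
    by (simp add: algebra_simps)
  moreover have "eventually (\<lambda>x. L z + k * (ln z - ln x) \<le> L x) (at_right 0)"
    using lower \<open>0 < z\<close> unfolding eventually_at_right_field by auto
  ultimately show ?thesis
    by (rule filterlim_at_top_mono)
qed

lemma pos_on_interval_by_continuation:
  fixes f :: "real \<Rightarrow> real"
  assumes cont: "continuous_on {a..b} f" and "0 < f a"
    and step: "\<And>x. a < x \<Longrightarrow> x \<le> b \<Longrightarrow> (\<And>y. a \<le> y \<Longrightarrow> y < x \<Longrightarrow> 0 < f y) \<Longrightarrow> f a \<le> f x"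
    and "a \<le> x" "x \<le> b"
  shows "0 < f x"
proof (rule ccontr)
  assume "\<not> 0 < f x"
  define S where "S = {a..b} \<inter> f -` {..0}"
  have "closed S"
    unfolding S_def using cont by (rule continuous_closed_preimage) auto
  moreover have "S \<noteq> {}" "bdd_below S"
    using \<open>\<not> 0 < f x\<close> \<open>a \<le> x\<close> \<open>x \<le> b\<close> unfolding S_def by (auto intro: bdd_belowI[of _ a])
  ultimately have "Inf S \<in> S"
    by (intro closed_contains_Inf)
  then have "a \<le> Inf S" "Inf S \<le> b" "f (Inf S) \<le> 0"
    unfolding S_def by auto
  moreover have "a < Inf S"
    using \<open>0 < f a\<close> calculation by (cases "a = Inf S") auto
  moreover have "0 < f y" if "a \<le> y" "y < Inf S" for y
    using cInf_lower[OF _ \<open>bdd_below S\<close>, of y] that \<open>Inf S \<le> b\<close> unfolding S_def by force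
  ultimately show False
    using step[of "Inf S"] \<open>0 < f a\<close> by force
qed

locale radial_solution =
  fixes \<kappa> m :: real and L L' L'' :: "real \<Rightarrow> real"
  assumes kappa_pos: "0 < \<kappa>" and m_pos: "0 < m"
    and solves_ode: "\<And>\<rho>. \<rho> \<in> {0<..<R_k \<kappa>} \<Longrightarrow>
      (L has_real_derivative L' \<rho>) (at \<rho>) \<and> (L' has_real_derivative L'' \<rho>) (at \<rho>) \<and>
      (sin_k \<kappa> \<rho>)^2 * L'' \<rho> + sin_k \<kappa> \<rho> * cos_k \<kappa> \<rho> * L' \<rho>
        + ((sin_k \<kappa> \<rho>)^2 - m^2) * L \<rho> = 0"
    and regular_at_0: "\<exists>c. (L \<longlongrightarrow> c) (at_right 0)"
    and pos_near_0: "\<exists>\<epsilon>>0. \<forall>\<rho>\<in>{0<..<\<epsilon>}. 0 < L \<rho>"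

lemma is_L_imp_radial_solution:
  assumes "0 < \<kappa>" "0 < m" "is_L \<kappa> m L"
  obtains L' L'' where "radial_solution \<kappa> m L L' L''"
  using assms unfolding is_L_def radial_solution_def by blast

context radial_solution
begin

lemma has_real_derivative_L:
  "0 < \<rho> \<Longrightarrow> \<rho> < R_k \<kappa> \<Longrightarrow> (L has_real_derivative L' \<rho>) (at \<rho>)"
  using solves_ode by simp

definition flux :: "real \<Rightarrow> real" where
  "flux \<rho> = sin_k \<kappa> \<rho> * L' \<rho>"

lemma has_real_derivative_flux:
  assumes "0 < \<rho>" "\<rho> < R_k \<kappa>"
  shows "(flux has_real_derivative (m^2 - (sin_k \<kappa> \<rho>)^2) * L \<rho> / sin_k \<kappa> \<rho>) (at \<rho>)"
proof -
  have "(flux has_real_derivative cos_k \<kappa> \<rho> * L' \<rho> + L'' \<rho> * sin_k \<kappa> \<rho>) (at \<rho>)"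
    unfolding flux_def[abs_def] using assms solves_ode[of \<rho>]
    by (auto intro!: DERIV_mult has_real_derivative_sin_k kappa_pos)
  moreover have "cos_k \<kappa> \<rho> * L' \<rho> + L'' \<rho> * sin_k \<kappa> \<rho>
      = (m^2 - (sin_k \<kappa> \<rho>)^2) * L \<rho> / sin_k \<kappa> \<rho>"
    using assms solves_ode[of \<rho>] sin_k_pos[OF kappa_pos, of \<rho>]
    by (simp add: field_simps power2_eq_square)
  ultimately show ?thesis
    by simp
qed

lemma flux_strict_mono:
  assumes "0 < a" "a < b" "b < min (R_k \<kappa>) m"
    and L_pos_on: "\<And>y. a < y \<Longrightarrow> y < b \<Longrightarrow> 0 < L y"
  shows "flux a < flux b"
proof (rule has_real_derivative_pos_imp_less[OF \<open>a < b\<close>])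
  fix y assume "a \<le> y" "y \<le> b"
  then show "(flux has_real_derivative (m^2 - (sin_k \<kappa> y)^2) * L y / sin_k \<kappa> y) (at y)"
    using assms by (intro has_real_derivative_flux) auto
next
  fix y assume y: "a < y" "y < b"
  then have "0 < sin_k \<kappa> y" "sin_k \<kappa> y < m"
    using assms sin_k_pos[OF kappa_pos, of y] sin_k_le[OF kappa_pos, of y] by auto
  then show "0 < (m^2 - (sin_k \<kappa> y)^2) * L y / sin_k \<kappa> y"
    using L_pos_on[OF y] by (simp add: power_strict_mono)
qed

lemma flux_mono:
  assumes "0 < a" "a \<le> b" "b < min (R_k \<kappa>) m"
    and "\<And>y. a < y \<Longrightarrow> y < b \<Longrightarrow> 0 < L y"
  shows "flux a \<le> flux b"
  using flux_strict_mono[of a b] assms by (cases "a = b") auto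

lemma L_flux_pos_near_0:
  obtains \<epsilon> where "0 < \<epsilon>" "\<And>\<rho>. 0 < \<rho> \<Longrightarrow> \<rho> < \<epsilon> \<Longrightarrow> 0 < L \<rho> \<and> 0 < flux \<rho>"
proof -
  obtain \<epsilon>0 where "0 < \<epsilon>0" and L_pos_on: "\<And>\<rho>. 0 < \<rho> \<Longrightarrow> \<rho> < \<epsilon>0 \<Longrightarrow> 0 < L \<rho>"
    using pos_near_0 by auto
  define \<epsilon> where "\<epsilon> = min \<epsilon>0 (min (R_k \<kappa>) m)"
  have "0 < \<epsilon>"
    unfolding \<epsilon>_def R_k_def using \<open>0 < \<epsilon>0\<close> kappa_pos m_pos by simp
  moreover have "0 < flux a" if "0 < a" "a < \<epsilon>" for a
  proof (rule ccontr)
    assume "\<not> 0 < flux a"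
    define z where "z = a / 2"
    have z: "0 < z" "z < a"
      using that unfolding z_def by auto
    have "flux z < flux a"
      using z that L_pos_on unfolding \<epsilon>_def by (intro flux_strict_mono) auto
    define k where "k = - flux z"
    have "0 < k"
      using \<open>flux z < flux a\<close> \<open>\<not> 0 < flux a\<close> unfolding k_def by simp
    have "filterlim L at_top (at_right 0)"
    proof (rule deriv_le_neg_inverse_imp_filterlim_at_top[OF \<open>0 < k\<close> \<open>0 < z\<close>])
      fix y assume y: "0 < y" "y \<le> z"
      then show "(L has_real_derivative L' y) (at y)"
        using z that unfolding \<epsilon>_def by (intro has_real_derivative_L) auto
      have s: "0 < sin_k \<kappa> y" "sin_k \<kappa> y \<le> y"
        using y z that sin_k_pos[OF kappa_pos, of y] sin_k_le[OF kappa_pos, of y]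
        unfolding \<epsilon>_def by auto
      have "flux y \<le> - k"
        using y z that L_pos_on unfolding k_def \<epsilon>_def minus_minus by (intro flux_mono) auto
      then have "L' y \<le> - k / sin_k \<kappa> y"
        using s unfolding flux_def by (simp add: field_simps)
      also have "\<dots> \<le> - k / y"
        using s \<open>0 < k\<close> by (simp add: frac_le)
      finally show "L' y \<le> - k / y" .
    qed
    then show False
      using regular_at_0 filterlim_at_top_imp_at_infinity
        not_tendsto_and_filterlim_at_infinity[OF trivial_limit_at_right_real] by blast
  qed
  ultimately show thesis
    using L_pos_on by (intro that[of \<epsilon>]) (auto simp: \<epsilon>_def)
qed

lemma L_pos:
  assumes "0 < \<rho>" "\<rho> < min (R_k \<kappa>) m"
  shows "0 < L \<rho>"
proof -
  obtain \<epsilon> where "0 < \<epsilon>" and near_0: "\<And>\<rho>. 0 < \<rho> \<Longrightarrow> \<rho> < \<epsilon> \<Longrightarrow> 0 < L \<rho> \<and> 0 < flux \<rho>"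
    using L_flux_pos_near_0 by blast
  define a where "a = min \<rho> (\<epsilon> / 2)"
  have a: "0 < a" "a \<le> \<rho>" "0 < L a" "0 < flux a"
    using assms \<open>0 < \<epsilon>\<close> near_0[of a] unfolding a_def by auto
  show ?thesis
  proof (rule pos_on_interval_by_continuation[of a \<rho> L])
    show "continuous_on {a..\<rho>} L"
      using a assms
      by (intro continuous_at_imp_continuous_on ballI DERIV_isCont[OF has_real_derivative_L]) auto
    fix x assume x: "a < x" "x \<le> \<rho>" and pos: "\<And>y. a \<le> y \<Longrightarrow> y < x \<Longrightarrow> 0 < L y"
    show "L a \<le> L x"
    proof (rule has_real_derivative_nonneg_imp_le[of a x L L'])
      fix y assume "a \<le> y" "y \<le> x"
      then show "(L has_real_derivative L' y) (at y)"
        using a x assms by (intro has_real_derivative_L) auto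
    next
      fix y assume y: "a < y" "y < x"
      then have "0 < flux y"
        using a x assms pos flux_mono[of a y] by auto
      then show "0 \<le> L' y"
        using a y sin_k_pos[OF kappa_pos, of y] x assms
        unfolding flux_def by (simp add: zero_less_mult_iff)
    qed (use x in simp)
  qed (use a in auto)
qed

lemma flux_pos:
  assumes "0 < \<rho>" "\<rho> < min (R_k \<kappa>) m"
  shows "0 < flux \<rho>"
proof -
  obtain \<epsilon> where "0 < \<epsilon>" and near_0: "\<And>\<rho>. 0 < \<rho> \<Longrightarrow> \<rho> < \<epsilon> \<Longrightarrow> 0 < L \<rho> \<and> 0 < flux \<rho>"
    using L_flux_pos_near_0 by blast
  define a where "a = min \<rho> (\<epsilon> / 2)"
  have "0 < a" "a \<le> \<rho>" "0 < flux a"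
    using assms \<open>0 < \<epsilon>\<close> near_0[of a] unfolding a_def by auto
  moreover have "flux a \<le> flux \<rho>"
    using calculation assms L_pos by (intro flux_mono) auto
  ultimately show ?thesis
    by simp
qed

lemma has_real_derivative_scaled_conformal_coord:
  assumes "0 < \<rho>" "\<rho> < R_k \<kappa>"
  shows "((\<lambda>r. a * (conformal_coord \<kappa> r - conformal_coord \<kappa> \<rho>1)) has_real_derivative
    a / sin_k \<kappa> \<rho>) (at \<rho>)"
  using DERIV_cmult[OF DERIV_diff[OF has_real_derivative_conformal_coord[OF kappa_pos assms]
        DERIV_const], of a]
  by simp

text \<open>The Wronskian, in the conformal coordinate t, of L and the solution cosh (a (t - t \<rho>1))
  of L_tt = a^2 L.\<close>
definition cosh_wronskian :: "real \<Rightarrow> real \<Rightarrow> real \<Rightarrow> real" where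
  "cosh_wronskian a \<rho>1 \<rho> =
    flux \<rho> * cosh (a * (conformal_coord \<kappa> \<rho> - conformal_coord \<kappa> \<rho>1))
    - a * L \<rho> * sinh (a * (conformal_coord \<kappa> \<rho> - conformal_coord \<kappa> \<rho>1))"

lemma has_real_derivative_cosh_wronskian:
  assumes "0 < \<rho>" "\<rho> < R_k \<kappa>"
  shows "(cosh_wronskian a \<rho>1 has_real_derivative
    cosh (a * (conformal_coord \<kappa> \<rho> - conformal_coord \<kappa> \<rho>1)) * L \<rho>
      * (m^2 - (sin_k \<kappa> \<rho>)^2 - a^2) / sin_k \<kappa> \<rho>) (at \<rho>)"
proof -
  define A where "A r = a * (conformal_coord \<kappa> r - conformal_coord \<kappa> \<rho>1)" for r
  define s where "s = sin_k \<kappa> \<rho>"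
  note derivs = has_real_derivative_flux[OF assms] has_real_derivative_L[OF assms]
    has_real_derivative_scaled_conformal_coord[OF assms, of a \<rho>1, folded A_def[abs_def]]
  note derivs = derivs has_field_derivative_cosh[OF derivs(3)] has_field_derivative_sinh[OF derivs(3)]
  have "(cosh_wronskian a \<rho>1 has_real_derivative
      (m^2 - s^2) * L \<rho> / s * cosh (A \<rho>) + sinh (A \<rho>) * (a / s) * flux \<rho>
      - (a * L' \<rho> * sinh (A \<rho>) + cosh (A \<rho>) * (a / s) * (a * L \<rho>))) (at \<rho>)"
    unfolding cosh_wronskian_def[abs_def] A_def[symmetric] s_def
    by (intro DERIV_diff DERIV_mult DERIV_cmult derivs)
  moreover have "(m^2 - s^2) * L \<rho> / s * cosh (A \<rho>) + sinh (A \<rho>) * (a / s) * flux \<rho>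
      - (a * L' \<rho> * sinh (A \<rho>) + cosh (A \<rho>) * (a / s) * (a * L \<rho>))
    = cosh (A \<rho>) * L \<rho> * (m^2 - s^2 - a^2) / s"
    using sin_k_pos[OF kappa_pos assms] unfolding flux_def s_def
    by (simp add: field_simps power2_eq_square)
  ultimately show ?thesis
    unfolding A_def s_def by simp
qed

lemma cosh_wronskian_nonneg:
  assumes "0 \<le> a" "0 < \<rho>1" "\<rho>1 \<le> \<rho>" "\<rho> < min (R_k \<kappa>) m" "\<rho>^2 + a^2 \<le> m^2"
  shows "0 \<le> cosh_wronskian a \<rho>1 \<rho>"
proof -
  have "cosh_wronskian a \<rho>1 \<rho>1 \<le> cosh_wronskian a \<rho>1 \<rho>"
  proof (rule has_real_derivative_nonneg_imp_le[OF \<open>\<rho>1 \<le> \<rho>\<close>])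
    fix y assume "\<rho>1 \<le> y" "y \<le> \<rho>"
    then show "(cosh_wronskian a \<rho>1 has_real_derivative
        cosh (a * (conformal_coord \<kappa> y - conformal_coord \<kappa> \<rho>1)) * L y
          * (m^2 - (sin_k \<kappa> y)^2 - a^2) / sin_k \<kappa> y) (at y)"
      using assms by (intro has_real_derivative_cosh_wronskian) auto
  next
    fix y assume y: "\<rho>1 < y" "y < \<rho>"
    then have "0 < sin_k \<kappa> y" "sin_k \<kappa> y \<le> \<rho>" "0 < L y"
      using assms sin_k_pos[OF kappa_pos, of y] sin_k_le[OF kappa_pos, of y] L_pos[of y] by auto
    moreover have "(sin_k \<kappa> y)^2 \<le> \<rho>^2"
      using calculation by (intro power_mono) auto
    then have "0 \<le> m^2 - (sin_k \<kappa> y)^2 - a^2"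
      using assms by simp
    ultimately show "0 \<le> cosh (a * (conformal_coord \<kappa> y - conformal_coord \<kappa> \<rho>1)) * L y
        * (m^2 - (sin_k \<kappa> y)^2 - a^2) / sin_k \<kappa> y"
      by (simp add: cosh_real_pos)
  qed
  moreover have "cosh_wronskian a \<rho>1 \<rho>1 = flux \<rho>1" "0 < flux \<rho>1"
    unfolding cosh_wronskian_def using assms flux_pos[of \<rho>1] by auto
  ultimately show ?thesis
    by simp
qed

lemma L_ge_cosh_comparison:
  assumes "0 \<le> a" "0 < \<rho>1" "\<rho>1 \<le> \<rho>2" "\<rho>2 < min (R_k \<kappa>) m" "\<rho>2^2 + a^2 \<le> m^2"
  shows "L \<rho>1 * cosh (a * (conformal_coord \<kappa> \<rho>2 - conformal_coord \<kappa> \<rho>1)) \<le> L \<rho>2"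
proof -
  define A where "A r = a * (conformal_coord \<kappa> r - conformal_coord \<kappa> \<rho>1)" for r
  have "L \<rho>1 / cosh (A \<rho>1) \<le> L \<rho>2 / cosh (A \<rho>2)"
  proof (rule has_real_derivative_nonneg_imp_le[OF \<open>\<rho>1 \<le> \<rho>2\<close>, where
        f' = "\<lambda>y. (L' y * cosh (A y) - L y * (sinh (A y) * (a / sin_k \<kappa> y))) / (cosh (A y) * cosh (A y))"])
    fix y assume "\<rho>1 \<le> y" "y \<le> \<rho>2"
    then have "0 < y" "y < R_k \<kappa>"
      using assms by auto
    then show "((\<lambda>r. L r / cosh (A r)) has_real_derivative
        (L' y * cosh (A y) - L y * (sinh (A y) * (a / sin_k \<kappa> y))) / (cosh (A y) * cosh (A y))) (at y)"
      unfolding A_def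
      by (intro DERIV_divide has_real_derivative_L has_field_derivative_cosh
          has_real_derivative_scaled_conformal_coord) auto
  next
    fix y assume "\<rho>1 < y" "y < \<rho>2"
    moreover from this have "y^2 \<le> \<rho>2^2"
      using assms by (intro power_mono) auto
    then have "y^2 + a^2 \<le> m^2"
      using assms by linarith
    ultimately have "0 < sin_k \<kappa> y" "0 \<le> cosh_wronskian a \<rho>1 y"
      using assms sin_k_pos[OF kappa_pos, of y] cosh_wronskian_nonneg[of a \<rho>1 y] by auto
    then show "0 \<le> (L' y * cosh (A y) - L y * (sinh (A y) * (a / sin_k \<kappa> y))) / (cosh (A y) * cosh (A y))"
      unfolding cosh_wronskian_def flux_def A_def[symmetric] by (simp add: field_simps)
  qed
  then show ?thesis
    using cosh_real_pos[of "A \<rho>2"] unfolding A_def by (simp add: field_simps)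
qed

lemma L_ge_cosh_ln_ratio:
  assumes "0 \<le> a" "0 < \<rho>1" "\<rho>1 \<le> \<rho>2" "\<rho>2 < min (R_k \<kappa>) m" "\<rho>2^2 + a^2 \<le> m^2"
  shows "L \<rho>1 * cosh (a * ln (\<rho>2 / \<rho>1)) \<le> L \<rho>2"
proof -
  have "0 \<le> ln (\<rho>2 / \<rho>1)" "ln (\<rho>2 / \<rho>1) \<le> conformal_coord \<kappa> \<rho>2 - conformal_coord \<kappa> \<rho>1"
    using ln_ratio_le_conformal_coord_diff[OF kappa_pos, of \<rho>1 \<rho>2] assms by auto
  then have "cosh (a * ln (\<rho>2 / \<rho>1)) \<le> cosh (a * (conformal_coord \<kappa> \<rho>2 - conformal_coord \<kappa> \<rho>1))"
    using \<open>0 \<le> a\<close>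
    by (intro cosh_real_nonneg_le_iff[THEN iffD2] mult_left_mono mult_nonneg_nonneg) auto
  moreover have "0 < L \<rho>1"
    using assms by (intro L_pos) auto
  ultimately show ?thesis
    using L_ge_cosh_comparison[OF assms] by (meson mult_left_mono less_imp_le order_trans)
qed

end

theorem mainTheorem4:
  fixes \<kappa> m \<delta> \<rho>1 \<rho>2 :: real and L :: "real \<Rightarrow> real"
  assumes "\<kappa> > 0" and "m > 0" and "is_L \<kappa> m L"
    and "0 < \<delta>" and "\<delta> < 1"
    and "0 < \<rho>1" and "\<rho>1 < \<rho>2" and "\<rho>2 < min (R_k \<kappa>) (m * \<delta>)"
  shows "L \<rho>2 / L \<rho>1 \<ge>
    (1/2) * ((\<rho>2/\<rho>1) powr (sqrt (1 - \<delta>^2) * m) - (\<rho>2/\<rho>1) powr (- (sqrt (1 - \<delta>^2) * m)))"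
proof -
  obtain L' L'' where "radial_solution \<kappa> m L L' L''"
    using is_L_imp_radial_solution assms(1-3) by blast
  then interpret radial_solution \<kappa> m L L' L'' .
  define a where "a = sqrt (1 - \<delta>^2) * m"
  have "0 \<le> a" "a^2 = (1 - \<delta>^2) * m^2"
    unfolding a_def using assms power_le_one[of \<delta> 2] by (simp_all add: power_mult_distrib)
  have "\<rho>2 < m * \<delta>" "m * \<delta> < m"
    using assms by simp_all
  then have "\<rho>2 < m" "\<rho>2^2 < (m * \<delta>)^2"
    using assms by (linarith, intro power_strict_mono) auto
  have "(1/2) * ((\<rho>2/\<rho>1) powr a - (\<rho>2/\<rho>1) powr (- a)) \<le> cosh (a * ln (\<rho>2 / \<rho>1))"
    using assms by (simp add: powr_def cosh_def)
  also have "\<dots> \<le> L \<rho>2 / L \<rho>1"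
  proof -
    have "L \<rho>1 * cosh (a * ln (\<rho>2 / \<rho>1)) \<le> L \<rho>2"
      using assms \<open>0 \<le> a\<close> \<open>a^2 = _\<close> \<open>\<rho>2 < m\<close> \<open>\<rho>2^2 < _\<close>
      by (intro L_ge_cosh_ln_ratio) (auto simp: power_mult_distrib algebra_simps)
    moreover have "0 < L \<rho>1"
      using assms \<open>\<rho>2 < m\<close> by (intro L_pos) auto
    ultimately show ?thesis
      by (simp add: pos_le_divide_eq mult.commute)
  qed
  finally show ?thesis
    unfolding a_def .
qed

end
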